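(* Let $\mu_1:\mathrm{Sym}^-\to B_2$ be an arbitrary measure, fix $a\in\mathbb R\cup\{\infty\}$ and define $g:\mathbb R\cup\{\infty\}\to B_2$ by $g(t)=\mu_1([[a,t)))$. (a) $g$ is left continuous on $\mathbb R\cup\{\infty\}$: for every $t\in\mathbb R\cup\{\infty\}$ there exists a real $t'<t$ such that $g(\xi)=g(t)$ for all $\xi\in(t',t)$. (b) $\mu_1$ is the left Lebesgue–Stieltjes measure associated to $g$, i.e. $\mu_1\big([[a_1,b_1))\Delta\cdots\Delta[[a_n,b_n))\big)=g(a_1)\oplus g(b_1)\oplus\cdots\oplus g(a_n)\oplus g(b_n)$ for all $a_1,\dots,a_n,b_1,\dots,b_n\in\mathbb R\cup\{\infty\}$.
   Context: $B_2=\{0,1\}$, $\oplus$ addition modulo 2, $\Delta$ symmetric difference. For $a,b\in\mathbb R\cup\{\infty\}$: $[[a,b))=[a,b)$ if $a<b$, $[b,a)$ if $b<a$, $\emptyset$ if $a=b$. $\mathrm{Sym}^-$ is the family of subsets of $\mathbb R$ generated by these intervals under $\Delta$ and $\cap$. $\mu_1$ is a measure if for every sequence of pairwise disjoint sets of $\mathrm{Sym}^-$ whose union lies in $\mathrm{Sym}^-$, only finitely many have $\mu_1$-value 1 and $\mu_1$ of the union is their number modulo 2. *)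

theory Defs
  imports "HOL-Analysis.Analysis" "HOL-Library.Z2"
begin

text \<open>Points of R \<union> {\<infinity>} are represented by extended reals different from -\<infinity>.
  B_2 is the two-element field bit (HOL-Library.Z2), whose addition is addition mod 2.\<close>

definition symdiff :: "'a set \<Rightarrow> 'a set \<Rightarrow> 'a set" where
  "symdiff A B = (A - B) \<union> (B - A)"

definition sintv :: "ereal \<Rightarrow> ereal \<Rightarrow> real set" where
  "sintv a b = (if a < b then {x. a \<le> ereal x \<and> ereal x < b}
                else if b < a then {x. b \<le> ereal x \<and> ereal x < a}
                else {})"

inductive_set SymMinus :: "real set set" where
  intv: "a \<noteq> -\<infinity> \<Longrightarrow> b \<noteq> -\<infinity> \<Longrightarrow> sintv a b \<in> SymMinus"
| sdiff: "A \<in> SymMinus \<Longrightarrow> B \<in> SymMinus \<Longrightarrow> symdiff A B \<in> SymMinus"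
| inter: "A \<in> SymMinus \<Longrightarrow> B \<in> SymMinus \<Longrightarrow> A \<inter> B \<in> SymMinus"

definition is_B2_measure :: "(real set \<Rightarrow> bit) \<Rightarrow> bool" where
  "is_B2_measure \<mu> \<longleftrightarrow>
     (\<forall>A :: nat \<Rightarrow> real set.
        (\<forall>n. A n \<in> SymMinus) \<and> disjoint_family A \<and> (\<Union>n. A n) \<in> SymMinus \<longrightarrow>
          finite {n. \<mu> (A n) = 1} \<and> \<mu> (\<Union>n. A n) = of_nat (card {n. \<mu> (A n) = 1}))"

fun bigsymdiff :: "nat \<Rightarrow> (nat \<Rightarrow> 'a set) \<Rightarrow> 'a set" where
  "bigsymdiff 0 F = {}"
| "bigsymdiff (Suc n) F = symdiff (bigsymdiff n F) (F n)"

end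

theory Submission
  imports Defs
begin

text \<open>Since [[b,c)) = [[a,b)) \<Delta> [[a,c)) and \<mu> turns \<Delta> into \<oplus>, we get
  \<mu>([[b,c))) = g(b) \<oplus> g(c), which gives (b) at once. For (a), if g were not left continuous at t,
  there would be points x(0) < x(1) < ... increasing to t with \<mu>([x(n),t)) = 1, hence
  \<mu>([x(n),x(n+1))) = 0 for all n. Countable additivity on the disjoint decomposition
  [x(0),t) = \<Union>n [x(n),x(n+1)) then forces \<mu>([x(0),t)) = 0, a contradiction.\<close>

lemma mem_sintv: "x \<in> sintv a b \<longleftrightarrow> (a \<le> ereal x) \<noteq> (b \<le> ereal x)"
  unfolding sintv_def by auto

lemma sintv_eq_symdiff: "sintv b c = symdiff (sintv a b) (sintv a c)"
  unfolding symdiff_def by (auto simp: mem_sintv)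

lemma sintv_commute: "sintv a b = sintv b a"
  by (auto simp: sintv_def)

lemma sintv_ereal_less: "a < b \<Longrightarrow> sintv (ereal a) (ereal b) = {a..<b}"
  by (auto simp: sintv_def)

lemma empty_in_SymMinus: "{} \<in> SymMinus"
  using SymMinus.intv[of 0 0] by (simp add: sintv_def)

lemma Diff_in_SymMinus:
  assumes "A \<in> SymMinus" "B \<in> SymMinus"
  shows "A - B \<in> SymMinus"
proof -
  have "A - B = symdiff A (A \<inter> B)"
    by (auto simp: symdiff_def)
  then show ?thesis
    using assms by (simp add: SymMinus.sdiff SymMinus.inter)
qed

lemma bigsymdiff_in_SymMinus: "(\<And>i. i < n \<Longrightarrow> F i \<in> SymMinus) \<Longrightarrow> bigsymdiff n F \<in> SymMinus"
  by (induction n) (auto intro: SymMinus.sdiff empty_in_SymMinus)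

lemma B2_measure_countably_additive:
  fixes A :: "nat \<Rightarrow> real set"
  assumes "is_B2_measure \<mu>" "\<And>n. A n \<in> SymMinus" "disjoint_family A" "(\<Union>n. A n) \<in> SymMinus"
  shows "finite {n. \<mu> (A n) = 1}" "\<mu> (\<Union>n. A n) = of_nat (card {n. \<mu> (A n) = 1})"
  using assms(1)[unfolded is_B2_measure_def, rule_format, of A] assms(2-4) by auto

lemma B2_measure_empty:
  assumes "is_B2_measure \<mu>"
  shows "\<mu> {} = 0"
proof -
  have "finite {n::nat. \<mu> {} = 1}"
    using B2_measure_countably_additive(1)[OF assms, of "\<lambda>_. {}"] empty_in_SymMinus
    by (simp add: disjoint_family_on_def)
  then show ?thesis
    by (cases "\<mu> {}") auto
qed

lemma B2_measure_Un:
  assumes meas: "is_B2_measure \<mu>" and "A \<in> SymMinus" "B \<in> SymMinus" "A \<union> B \<in> SymMinus"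
    and "A \<inter> B = {}"
  shows "\<mu> (A \<union> B) = \<mu> A + \<mu> B"
proof -
  define F where "F n = (if n = 0 then A else if n = 1 then B else {})" for n :: nat
  have F_Un: "(\<Union>n. F n) = A \<union> B"
    unfolding F_def by (auto split: if_splits)
  have "disjoint_family F"
    using assms(5) by (auto simp: disjoint_family_on_def F_def)
  moreover have "F n \<in> SymMinus" for n
    using assms(2,3) empty_in_SymMinus by (simp add: F_def)
  ultimately have "\<mu> (A \<union> B) = of_nat (card {n. \<mu> (F n) = 1})"
    using B2_measure_countably_additive(2)[OF meas, of F] F_Un assms(4) by simp
  moreover have "{n. \<mu> (F n) = 1} = (if \<mu> A = 1 then {0} else {}) \<union> (if \<mu> B = 1 then {1} else {})"
    using B2_measure_empty[OF meas] by (auto simp: F_def)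
  ultimately show ?thesis
    by (cases "\<mu> A"; cases "\<mu> B") simp_all
qed

lemma B2_measure_symdiff:
  assumes meas: "is_B2_measure \<mu>" and A: "A \<in> SymMinus" and B: "B \<in> SymMinus"
  shows "\<mu> (symdiff A B) = \<mu> A + \<mu> B"
proof -
  have AB: "A - B \<in> SymMinus" and BA: "B - A \<in> SymMinus" and I: "A \<inter> B \<in> SymMinus"
    using A B by (simp_all add: Diff_in_SymMinus SymMinus.inter)
  have "\<mu> A = \<mu> (A - B) + \<mu> (A \<inter> B)"
    using B2_measure_Un[OF meas AB I] A by (metis Diff_disjoint Int_Diff Un_Diff_Int inf_commute)
  moreover have "\<mu> B = \<mu> (B - A) + \<mu> (A \<inter> B)"
    using B2_measure_Un[OF meas BA I] B by (metis Diff_disjoint Int_Diff Un_Diff_Int inf_commute)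
  moreover have "\<mu> (symdiff A B) = \<mu> (A - B) + \<mu> (B - A)"
    using B2_measure_Un[OF meas AB BA] SymMinus.sdiff[OF A B] unfolding symdiff_def by blast
  ultimately show ?thesis
    by (cases "\<mu> (A - B)"; cases "\<mu> (B - A)"; cases "\<mu> (A \<inter> B)") simp_all
qed

lemma B2_measure_bigsymdiff:
  assumes meas: "is_B2_measure \<mu>" and F: "\<And>i. i < n \<Longrightarrow> F i \<in> SymMinus"
  shows "\<mu> (bigsymdiff n F) = (\<Sum>i<n. \<mu> (F i))"
  using F
proof (induction n)
  case 0
  then show ?case
    by (simp add: B2_measure_empty[OF meas])
next
  case (Suc n)
  then have "bigsymdiff n F \<in> SymMinus"
    by (simp add: bigsymdiff_in_SymMinus)
  with Suc show ?case
    by (simp add: B2_measure_symdiff[OF meas])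
qed

lemma B2_measure_sintv:
  assumes "is_B2_measure \<mu>" "a \<noteq> -\<infinity>" "b \<noteq> -\<infinity>" "c \<noteq> -\<infinity>"
  shows "\<mu> (sintv b c) = \<mu> (sintv a b) + \<mu> (sintv a c)"
  using B2_measure_symdiff[OF assms(1) SymMinus.intv SymMinus.intv] assms(2-4)
  by (metis sintv_eq_symdiff)

lemma strict_mono_seq_cofinal_below:
  fixes t :: ereal and S :: "real set"
  assumes "t \<noteq> -\<infinity>" and cofinal: "\<And>s. ereal s < t \<Longrightarrow> \<exists>x\<in>S. s < x \<and> ereal x < t"
  obtains \<xi> :: "nat \<Rightarrow> real" where "strict_mono \<xi>" "\<And>n. \<xi> n \<in> S" "\<And>n. ereal (\<xi> n) < t"
    "\<And>x. ereal x < t \<Longrightarrow> \<exists>n. x < \<xi> n"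
proof -
  obtain X :: "nat \<Rightarrow> real" where X_less: "\<And>n. ereal (X n) < t" and X_lim: "(\<lambda>n. ereal (X n)) \<longlonglongrightarrow> t"
    using ereal_incseq_approx[of "-\<infinity>" t] assms(1) by (metis ereal_MInfty_lessI)
  have "\<exists>\<xi>. \<forall>n. (\<xi> n \<in> S \<and> ereal (\<xi> n) < t \<and> X n < \<xi> n) \<and> \<xi> n < \<xi> (Suc n)"
  proof (rule dependent_nat_choice)
    show "\<exists>x. x \<in> S \<and> ereal x < t \<and> X 0 < x"
      using cofinal X_less by blast
  next
    fix x n
    assume "x \<in> S \<and> ereal x < t \<and> X n < x"
    then have "ereal (max x (X (Suc n))) < t"
      using X_less by (simp add: max_def)
    then show "\<exists>y. (y \<in> S \<and> ereal y < t \<and> X (Suc n) < y) \<and> x < y"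
      using cofinal by fastforce
  qed
  then obtain \<xi> where \<xi>: "\<And>n. \<xi> n \<in> S" "\<And>n. ereal (\<xi> n) < t" "\<And>n. X n < \<xi> n"
    and Suc_less: "\<And>n. \<xi> n < \<xi> (Suc n)"
    by blast
  have "\<exists>n. x < \<xi> n" if "ereal x < t" for x
  proof -
    have "\<forall>\<^sub>F n in sequentially. ereal x < ereal (X n)"
      using X_lim that by (rule order_tendstoD(1))
    then obtain n where "x < X n"
      by (auto simp: eventually_sequentially)
    then show ?thesis
      using \<xi>(3)[of n] by (meson less_trans)
  qed
  moreover have "strict_mono \<xi>"
    using Suc_less by (simp add: strict_mono_Suc_iff)
  ultimately show thesis
    using \<xi> that by blast
qed

lemma disjoint_family_sintv_strict_mono:
  assumes "strict_mono \<xi>"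
  shows "disjoint_family (\<lambda>n. sintv (ereal (\<xi> n)) (ereal (\<xi> (Suc n))))"
proof -
  have "{\<xi> m..<\<xi> (Suc m)} \<inter> {\<xi> n..<\<xi> (Suc n)} = {}" if "m < n" for m n
    using strict_mono_leD[OF assms, of "Suc m" n] that by auto
  then show ?thesis
    unfolding disjoint_family_on_def
    using assms by (simp add: sintv_ereal_less strict_mono_Suc_iff) (metis linorder_neqE_nat)
qed

lemma UN_sintv_strict_mono:
  assumes mono: "strict_mono \<xi>" and less: "\<And>n. ereal (\<xi> n) < t"
    and cofinal: "\<And>x. ereal x < t \<Longrightarrow> \<exists>n. x < \<xi> n"
  shows "(\<Union>n. sintv (ereal (\<xi> n)) (ereal (\<xi> (Suc n)))) = sintv (ereal (\<xi> 0)) t"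
proof (intro equalityI subsetI)
  fix x
  assume "x \<in> (\<Union>n. sintv (ereal (\<xi> n)) (ereal (\<xi> (Suc n))))"
  then obtain n where "\<xi> n \<le> x" "x < \<xi> (Suc n)"
    using mono by (auto simp: sintv_ereal_less strict_mono_Suc_iff)
  moreover have "\<xi> 0 \<le> \<xi> n"
    using strict_mono_leD[OF mono] by simp
  moreover have "ereal x < t"
    using \<open>x < \<xi> (Suc n)\<close> less[of "Suc n"] by (meson less_ereal.simps(1) less_trans)
  ultimately show "x \<in> sintv (ereal (\<xi> 0)) t"
    by (auto simp: mem_sintv)
next
  fix x
  assume "x \<in> sintv (ereal (\<xi> 0)) t"
  then have "\<xi> 0 \<le> x" "ereal x < t"
    using less[of 0] by (auto simp: sintv_def)
  then obtain m where "x < \<xi> m"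
    using cofinal by blast
  with \<open>\<xi> 0 \<le> x\<close> obtain k where "\<xi> k \<le> x" "x < \<xi> (Suc k)"
    using ex_least_nat_less[of "\<lambda>n. x < \<xi> n" m] by (auto simp: not_less)
  then show "x \<in> (\<Union>n. sintv (ereal (\<xi> n)) (ereal (\<xi> (Suc n))))"
    using mono by (auto simp: sintv_ereal_less strict_mono_Suc_iff)
qed

lemma B2_measure_sintv_left_vanishing:
  assumes meas: "is_B2_measure \<mu>" and t: "t \<noteq> -\<infinity>"
  obtains t' :: real where "ereal t' < t"
    "\<And>\<xi>. t' < \<xi> \<Longrightarrow> ereal \<xi> < t \<Longrightarrow> \<mu> (sintv (ereal \<xi>) t) = 0"
proof (rule ccontr)
  assume no_witness: "\<not> thesis"
  note witness = that
  define S where "S = {x. \<mu> (sintv (ereal x) t) = 1}"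
  have cofinal_S: "\<exists>x\<in>S. s < x \<and> ereal x < t" if s: "ereal s < t" for s
  proof (rule ccontr)
    assume "\<not> (\<exists>x\<in>S. s < x \<and> ereal x < t)"
    then have "\<mu> (sintv (ereal \<xi>) t) = 0" if "s < \<xi>" "ereal \<xi> < t" for \<xi>
      using that by (auto simp: S_def)
    then show False
      using witness[OF s] no_witness by blast
  qed
  obtain \<xi> :: "nat \<Rightarrow> real" where mono: "strict_mono \<xi>" and "\<And>n. \<xi> n \<in> S"
    and less: "\<And>n. ereal (\<xi> n) < t" and cofinal: "\<And>x. ereal x < t \<Longrightarrow> \<exists>n. x < \<xi> n"
    using strict_mono_seq_cofinal_below[OF t cofinal_S] by metis
  then have \<xi>_one: "\<mu> (sintv (ereal (\<xi> n)) t) = 1" for n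
    by (simp add: S_def)
  define A where "A n = sintv (ereal (\<xi> n)) (ereal (\<xi> (Suc n)))" for n
  have A_Un: "(\<Union>n. A n) = sintv (ereal (\<xi> 0)) t"
    unfolding A_def by (rule UN_sintv_strict_mono[OF mono less cofinal])
  have "\<mu> (A n) = 0" for n
    using B2_measure_sintv[OF meas t, of "ereal (\<xi> n)" "ereal (\<xi> (Suc n))"] \<xi>_one
    by (simp add: A_def sintv_commute[of t])
  moreover have "disjoint_family A"
    unfolding A_def by (rule disjoint_family_sintv_strict_mono[OF mono])
  moreover have "A n \<in> SymMinus" for n
    by (simp add: A_def SymMinus.intv)
  moreover have "(\<Union>n. A n) \<in> SymMinus"
    using t by (simp add: A_Un SymMinus.intv)
  ultimately have "\<mu> (\<Union>n. A n) = 0"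
    using B2_measure_countably_additive(2)[OF meas, of A] by simp
  with \<xi>_one[of 0] show False
    by (simp add: A_Un)
qed

theorem theorem6p7:
  fixes \<mu> :: "real set \<Rightarrow> bit" and a :: ereal and g :: "ereal \<Rightarrow> bit"
  assumes meas: "is_B2_measure \<mu>"
    and a: "a \<noteq> -\<infinity>"
    and g_def: "\<And>t. g t = \<mu> (sintv a t)"
  shows "(\<forall>t. t \<noteq> -\<infinity> \<longrightarrow>
            (\<exists>t'::real. ereal t' < t \<and>
               (\<forall>\<xi>::real. t' < \<xi> \<and> ereal \<xi> < t \<longrightarrow> g (ereal \<xi>) = g t)))
       \<and> (\<forall>(n::nat) (as::nat \<Rightarrow> ereal) (bs::nat \<Rightarrow> ereal).
            (\<forall>i<n. as i \<noteq> -\<infinity> \<and> bs i \<noteq> -\<infinity>) \<longrightarrow>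
            \<mu> (bigsymdiff n (\<lambda>i. sintv (as i) (bs i))) = (\<Sum>i<n. g (as i) + g (bs i)))"
proof (intro conjI allI impI)
  fix t :: ereal
  assume t: "t \<noteq> -\<infinity>"
  obtain t' :: real where "ereal t' < t"
    and vanish: "\<And>\<xi>. t' < \<xi> \<Longrightarrow> ereal \<xi> < t \<Longrightarrow> \<mu> (sintv (ereal \<xi>) t) = 0"
    using B2_measure_sintv_left_vanishing[OF meas t] by blast
  moreover have "g (ereal \<xi>) = g t" if "t' < \<xi>" "ereal \<xi> < t" for \<xi>
  proof -
    have "g (ereal \<xi>) + g t = 0"
      using vanish[OF that] B2_measure_sintv[OF meas a _ t, of "ereal \<xi>"] g_def by simp
    then show ?thesis
      by (cases "g (ereal \<xi>)"; cases "g t") simp_all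
  qed
  ultimately show "\<exists>t'::real. ereal t' < t \<and>
      (\<forall>\<xi>::real. t' < \<xi> \<and> ereal \<xi> < t \<longrightarrow> g (ereal \<xi>) = g t)"
    by blast
next
  fix n and as bs :: "nat \<Rightarrow> ereal"
  assume finite_ends: "\<forall>i<n. as i \<noteq> -\<infinity> \<and> bs i \<noteq> -\<infinity>"
  then have "\<mu> (bigsymdiff n (\<lambda>i. sintv (as i) (bs i))) = (\<Sum>i<n. \<mu> (sintv (as i) (bs i)))"
    by (simp add: B2_measure_bigsymdiff[OF meas] SymMinus.intv)
  also have "\<dots> = (\<Sum>i<n. g (as i) + g (bs i))"
    using finite_ends by (intro sum.cong refl) (simp add: g_def B2_measure_sintv[OF meas a])
  finally show "\<mu> (bigsymdiff n (\<lambda>i. sintv (as i) (bs i))) = (\<Sum>i<n. g (as i) + g (bs i))" .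
qed

end
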